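(* Let $n$ be a positive integer and consider the finite configuration of height $2$ and type $(1,n,1)$ given by $$p_{0,1}=0,\quad p_{2,1}=2\mathrm{i},\quad p_{1,j}=\mathrm{i}+\cot\frac{j\pi}{n+1}\ \ (1\le j\le n).$$ This configuration is balanced, non-degenerate and has residual force $\frac{n+1}{2n\mathrm{i}}$.
   Context: For a finite configuration $(p_{k,i})_{0\le k\le h,1\le i\le n_k}$ of type $(n_0,\ldots,n_h)$ with $n_0=n_h=1$: set $c_k=1/n_k$, $n_{-1}=n_{h+1}=0$, $u_{k,i}=p_{k,i}-p_{k,1}$, $\ell_k=p_{k,1}-p_{k-1,1}$; forces $F_{k,i}=2\sum_{j\neq i}\frac{c_k^2}{p_{k,i}-p_{k,j}}-\sum_{j=1}^{n_{k+1}}\frac{c_kc_{k+1}}{p_{k,i}-p_{k+1,j}}-\sum_{j=1}^{n_{k-1}}\frac{c_kc_{k-1}}{p_{k,i}-p_{k-1,j}}$ and $G_k=\sum_{i=1}^{n_k}\sum_{j=1}^{n_{k-1}}\frac{c_kc_{k-1}}{p_{k,i}-p_{k-1,j}}$ ($1\le k\le h$). Balanced means $F_{k,i}=0$ for $1\le k\le h-1$; the residual force is $F_{0,1}$; non-degenerate means the differential of the map $(\ell_1,u_{1,2},\ldots,u_{1,n_1},\ell_2,\ldots,\ell_h)\mapsto(G_1,F_{1,2},\ldots,F_{1,n_1},G_2,\ldots,G_h)$ is an isomorphism. Here $h=2$, so the map is $(\ell_1,u_{1,2},\ldots,u_{1,n},\ell_2)\mapsto(G_1,F_{1,2},\ldots,F_{1,n},G_2)$.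 *)

theory Defs
  imports "HOL-Analysis.Analysis" "Jordan_Normal_Form.Determinant"
begin

text \<open>A finite configuration of height h and type (n_0,...,n_h) is given by
  p :: nat => nat => complex (p k i for 0 <= k <= h, 1 <= i <= n_k) and the type
  nn :: nat => nat.\<close>

definition ntype :: "nat \<Rightarrow> (nat \<Rightarrow> nat) \<Rightarrow> nat \<Rightarrow> nat" where
  "ntype h nn k = (if k \<le> h then nn k else 0)"

definition cc :: "nat \<Rightarrow> (nat \<Rightarrow> nat) \<Rightarrow> nat \<Rightarrow> complex" where
  "cc h nn k = 1 / of_nat (ntype h nn k)"

text \<open>Force F_{k,i}.  The lower-level sum is empty for k = 0 (n_{-1} = 0).\<close>
definition force :: "nat \<Rightarrow> (nat \<Rightarrow> nat) \<Rightarrow> (nat \<Rightarrow> nat \<Rightarrow> complex) \<Rightarrow> nat \<Rightarrow> nat \<Rightarrow> complex" where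
  "force h nn p k i =
     2 * (\<Sum>j\<in>{1..ntype h nn k} - {i}. (cc h nn k)^2 / (p k i - p k j))
     - (\<Sum>j\<in>{1..ntype h nn (k+1)}. cc h nn k * cc h nn (k+1) / (p k i - p (k+1) j))
     - (if k = 0 then 0 else
        (\<Sum>j\<in>{1..ntype h nn (k-1)}. cc h nn k * cc h nn (k-1) / (p k i - p (k-1) j)))"

definition Gforce :: "nat \<Rightarrow> (nat \<Rightarrow> nat) \<Rightarrow> (nat \<Rightarrow> nat \<Rightarrow> complex) \<Rightarrow> nat \<Rightarrow> complex" where
  "Gforce h nn p k =
     (\<Sum>i\<in>{1..ntype h nn k}. \<Sum>j\<in>{1..ntype h nn (k-1)}.
        cc h nn k * cc h nn (k-1) / (p k i - p (k-1) j))"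

definition balanced :: "nat \<Rightarrow> (nat \<Rightarrow> nat) \<Rightarrow> (nat \<Rightarrow> nat \<Rightarrow> complex) \<Rightarrow> bool" where
  "balanced h nn p \<longleftrightarrow> (\<forall>k i. 1 \<le> k \<and> k \<le> h - 1 \<and> 1 \<le> i \<and> i \<le> nn k \<longrightarrow> force h nn p k i = 0)"

definition residual_force :: "nat \<Rightarrow> (nat \<Rightarrow> nat) \<Rightarrow> (nat \<Rightarrow> nat \<Rightarrow> complex) \<Rightarrow> complex" where
  "residual_force h nn p = force h nn p 0 1"

text \<open>Coordinates x :: nat => complex indexed by 0..n:
  x 0 = l_1, x (i-1) = u_{1,i} for 2 <= i <= n, x n = l_2.\<close>
definition type1n1 :: "nat \<Rightarrow> nat \<Rightarrow> nat" where
  "type1n1 n k = (if k = 1 then n else 1)"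

definition rebuild2 :: "nat \<Rightarrow> complex \<Rightarrow> (nat \<Rightarrow> complex) \<Rightarrow> nat \<Rightarrow> nat \<Rightarrow> complex" where
  "rebuild2 n p01 x k i =
     (if k = 0 then p01
      else if k = 1 then (if i = 1 then p01 + x 0 else p01 + x 0 + x (i - 1))
      else p01 + x 0 + x n)"

definition coord_map2 :: "nat \<Rightarrow> complex \<Rightarrow> (nat \<Rightarrow> complex) \<Rightarrow> nat \<Rightarrow> complex" where
  "coord_map2 n p01 x a =
     (let q = rebuild2 n p01 x in
      if a = 0 then Gforce 2 (type1n1 n) q 1
      else if a < n then force 2 (type1n1 n) q 1 (a + 1)
      else Gforce 2 (type1n1 n) q 2)"

definition coords2 :: "nat \<Rightarrow> (nat \<Rightarrow> nat \<Rightarrow> complex) \<Rightarrow> nat \<Rightarrow> complex" where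
  "coords2 n p a =
     (if a = 0 then p 1 1 - p 0 1
      else if a < n then p 1 (a + 1) - p 1 1
      else p 2 1 - p 1 1)"

definition nondegenerate2 :: "nat \<Rightarrow> (nat \<Rightarrow> nat \<Rightarrow> complex) \<Rightarrow> bool" where
  "nondegenerate2 n p \<longleftrightarrow>
     (\<exists>J :: nat \<Rightarrow> nat \<Rightarrow> complex.
        (\<forall>a\<le>n. \<forall>b\<le>n.
           ((\<lambda>z. coord_map2 n (p 0 1) ((coords2 n p)(b := z)) a) has_field_derivative J a b)
             (at (coords2 n p b)))
        \<and> det (mat (n+1) (n+1) (\<lambda>(a,b). J a b)) \<noteq> 0)"

definition example_config :: "nat \<Rightarrow> nat \<Rightarrow> nat \<Rightarrow> complex" where
  "example_config n k j =
     (if k = 0 then 0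
      else if k = 1 then \<i> + complex_of_real (cot (real j * pi / real (n + 1)))
      else 2 * \<i>)"

end

theory Submission
  imports Defs
begin

text \<open>
  Write x_j = cot (j pi/(n+1)), so that p_{1,j} = x_j + i. Balance and the residual force reduce
  to the cotangent identities sum_{j /= i} 1/(x_i - x_j) = n x_i/(1 + x_i^2) and
  sum_j 1/(x_j + i) = -i(n+1)/2.

  For non-degeneracy take velocities of the points p_{1,j} and p_{2,1} (with p_{0,1} = 0 fixed)
  annihilated by the differentials of G_1, G_2 and F_{1,2}, ..., F_{1,n}. The differentials of
  all F_{1,i} add up to a combination of those of G_1 and G_2, so that of F_{1,1} vanishes too.
  Forces are homogeneous of degree -1, so the dilation about p_{0,1} lies in the kernel;
  subtracting a multiple of it we may assume that p_{2,1} is fixed. The differential of the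
  level-1 forces then has real coefficients, and for real velocities r the pairing
  sum_i r_i dF_{1,i}(r) is minus a sum of squares, which forces r = 0. Hence the velocity is a
  dilation, and the differential of G_1 detects it because sum_j 1/p_{1,j} /= 0.
\<close>

section \<open>Cotangent nodes\<close>

definition node_angle :: "nat \<Rightarrow> real" where
  "node_angle n = pi / real (n + 1)"

definition cot_node :: "nat \<Rightarrow> nat \<Rightarrow> real" where
  "cot_node n j = cot (real j * node_angle n)"

lemma node_angle_pos: "0 < node_angle n"
  by (simp add: node_angle_def)

lemma node_angle_bounds:
  assumes "1 \<le> j" "j \<le> n"
  shows "0 < real j * node_angle n" "real j * node_angle n < pi"
proof -
  have "real j * pi < real (n + 1) * pi"
    using assms by simp
  then show "real j * node_angle n < pi"
    by (simp add: node_angle_def divide_less_eq mult.commute)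
  show "0 < real j * node_angle n"
    using assms by (simp add: node_angle_def)
qed

lemma sin_node_angle_pos: "1 \<le> j \<Longrightarrow> j \<le> n \<Longrightarrow> 0 < sin (real j * node_angle n)"
  using node_angle_bounds by (simp add: sin_gt_zero)

lemma cot_node_reflect:
  assumes "m \<le> n + 1"
  shows "cot_node n (Suc n - m) = - cot_node n m"
proof -
  have "real (Suc n - m) * node_angle n = pi - real m * node_angle n"
    using assms by (simp add: node_angle_def of_nat_diff field_simps)
  then show ?thesis by (simp add: cot_node_def cot_def)
qed

lemma sum_cot_node: "(\<Sum>m=1..n. cot_node n m) = 0"
proof -
  have "(\<Sum>m=1..n. cot_node n m) = (\<Sum>m=1..n. cot_node n (n + 1 - m))"
    using sum.atLeastAtMost_rev[of "cot_node n" 1 n] by (simp add: add.commute)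
  also have "\<dots> = - (\<Sum>m=1..n. cot_node n m)"
    by (subst sum_negf[symmetric], rule sum.cong) (auto simp: cot_node_reflect)
  finally show ?thesis by simp
qed

lemma sum_cot_node_differences:
  assumes i: "i \<in> {1..n}"
  shows "(\<Sum>j\<in>{1..n}-{i}. cot ((real j - real i) * node_angle n)) = cot_node n i"
proof -
  let ?f = "cot_node n"
  have below: "(\<Sum>j\<in>{1..<i}. cot ((real j - real i) * node_angle n)) = - (\<Sum>m\<in>{1..<i}. ?f m)"
  proof -
    have "(\<Sum>j\<in>{1..<i}. cot ((real j - real i) * node_angle n)) = (\<Sum>j\<in>{1..<i}. - ?f (i - j))"
    proof (intro sum.cong refl)
      fix j assume "j \<in> {1..<i}"
      then have "(real j - real i) * node_angle n = - (real (i - j) * node_angle n)"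
        by (simp add: of_nat_diff algebra_simps)
      then show "cot ((real j - real i) * node_angle n) = - ?f (i - j)"
        by (simp add: cot_node_def)
    qed
    moreover have "(\<Sum>j\<in>{1..<i}. ?f (i - j)) = (\<Sum>m\<in>{1..<i}. ?f m)"
      by (rule sum.reindex_bij_witness[where i="\<lambda>m. i - m" and j="\<lambda>m. i - m"]) auto
    ultimately show ?thesis by (simp add: sum_negf)
  qed
  have above: "(\<Sum>j\<in>{i+1..n}. cot ((real j - real i) * node_angle n)) = - (\<Sum>m\<in>{i+1..n}. ?f m)"
  proof -
    have "(\<Sum>j\<in>{i+1..n}. cot ((real j - real i) * node_angle n)) =
        (\<Sum>j\<in>{i+1..n}. - ?f (n + 1 - (j - i)))"
    proof (intro sum.cong refl)
      fix j assume j: "j \<in> {i+1..n}"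
      then have "cot ((real j - real i) * node_angle n) = ?f (j - i)"
        by (simp add: cot_node_def of_nat_diff)
      also have "\<dots> = - ?f (n + 1 - (j - i))"
        using j cot_node_reflect[of "j - i" n] by fastforce
      finally show "cot ((real j - real i) * node_angle n) = - ?f (n + 1 - (j - i))" .
    qed
    moreover have "(\<Sum>j\<in>{i+1..n}. ?f (n + 1 - (j - i))) = (\<Sum>m\<in>{i+1..n}. ?f m)"
      by (rule sum.reindex_bij_witness[where i="\<lambda>m. n + 1 + i - m" and j="\<lambda>m. n + 1 + i - m"]) auto
    ultimately show ?thesis by (simp add: sum_negf)
  qed
  have split: "{1..n} - {i} = {1..<i} \<union> {i+1..n}" and disjoint: "{1..<i} \<inter> {i+1..n} = {}"
    using i by auto
  have "(\<Sum>j\<in>{1..n}-{i}. cot ((real j - real i) * node_angle n)) = - (\<Sum>m\<in>{1..n}-{i}. ?f m)"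
    unfolding split sum.union_disjoint[OF finite_atLeastLessThan finite_atLeastAtMost disjoint]
    using below above by simp
  also have "(\<Sum>m\<in>{1..n}-{i}. ?f m) = - ?f i"
    using sum_cot_node[of n] i by (simp add: sum_diff1)
  finally show ?thesis by simp
qed

lemma inverse_cot_diff:
  fixes a b :: real
  assumes "sin a \<noteq> 0" "sin b \<noteq> 0" "sin (b - a) \<noteq> 0"
  shows "1 / (cot a - cot b) = sin a * (cos a + sin a * cot (b - a))"
proof -
  have "sin (b - a) = sin b * cos a - cos b * sin a"
    by (simp add: sin_diff)
  then have "cot a - cot b = sin (b - a) / (sin a * sin b)"
    using assms by (simp add: cot_def field_simps)
  moreover have "cos a * sin (b - a) + sin a * cos (b - a) = sin b"
    using sin_add[of a "b - a"] by (simp add: algebra_simps)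
  then have "cos a + sin a * cot (b - a) = sin b / sin (b - a)"
    using assms by (simp add: cot_def field_simps)
  ultimately show ?thesis
    using assms by simp
qed

lemma sin_node_angle_diff_nonzero:
  assumes "i \<in> {1..n}" "j \<in> {1..n}" "i \<noteq> j"
  shows "sin (real j * node_angle n - real i * node_angle n) \<noteq> 0"
proof
  assume "sin (real j * node_angle n - real i * node_angle n) = 0"
  moreover have "\<bar>real j * node_angle n - real i * node_angle n\<bar> < pi"
    using node_angle_bounds[of i n] node_angle_bounds[of j n] assms by auto
  ultimately have "real j * node_angle n = real i * node_angle n"
    using sin_eq_0_pi by (smt (verit))
  then show False
    using assms node_angle_pos[of n] by simp
qed

lemma inj_on_cot_node: "inj_on (cot_node n) {1..n}"
proof (rule inj_onI, rule ccontr)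
  fix i j assume ij: "i \<in> {1..n}" "j \<in> {1..n}" "cot_node n i = cot_node n j" "i \<noteq> j"
  have "sin (real i * node_angle n) \<noteq> 0" "sin (real j * node_angle n) \<noteq> 0"
    using sin_node_angle_pos[of i n] sin_node_angle_pos[of j n] ij by auto
  with ij(3) have "sin (real j * node_angle n - real i * node_angle n) = 0"
    by (simp add: cot_node_def cot_def sin_diff field_simps)
  with sin_node_angle_diff_nonzero ij show False by blast
qed

lemma one_plus_cot_squared: "sin t \<noteq> 0 \<Longrightarrow> 1 + cot t ^ 2 = 1 / sin t ^ 2"
  by (simp add: cot_def field_simps power_divide)

lemma cot_node_balance:
  assumes i: "i \<in> {1..n}"
  shows "(\<Sum>j\<in>{1..n}-{i}. 1 / (cot_node n i - cot_node n j)) =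
    real n * cot_node n i / (1 + cot_node n i ^ 2)"
proof -
  let ?a = "real i * node_angle n"
  have sa: "sin ?a \<noteq> 0"
    using sin_node_angle_pos[of i n] i by auto
  have "(\<Sum>j\<in>{1..n}-{i}. 1 / (cot_node n i - cot_node n j)) =
        (\<Sum>j\<in>{1..n}-{i}. sin ?a * cos ?a + sin ?a ^ 2 * cot ((real j - real i) * node_angle n))"
  proof (intro sum.cong refl)
    fix j assume j: "j \<in> {1..n} - {i}"
    have "sin (real j * node_angle n) \<noteq> 0"
      using sin_node_angle_pos[of j n] j by auto
    moreover have "sin (real j * node_angle n - ?a) \<noteq> 0"
      using sin_node_angle_diff_nonzero[of i n j] i j by auto
    ultimately show "1 / (cot_node n i - cot_node n j) =
        sin ?a * cos ?a + sin ?a ^ 2 * cot ((real j - real i) * node_angle n)"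
      unfolding cot_node_def using sa
      by (simp add: inverse_cot_diff left_diff_distrib power2_eq_square algebra_simps)
  qed
  also have "\<dots> = real (n - 1) * (sin ?a * cos ?a) + sin ?a ^ 2 * cot ?a"
    using i sum_cot_node_differences[OF i] by (simp add: sum.distrib cot_node_def flip: sum_distrib_left)
  also have "\<dots> = real n * (sin ?a * cos ?a)"
    using i sa by (simp add: cot_def power2_eq_square of_nat_diff algebra_simps)
  also have "\<dots> = real n * cot_node n i / (1 + cot_node n i ^ 2)"
    using sa by (simp add: cot_node_def one_plus_cot_squared) (simp add: cot_def power2_eq_square)
  finally show ?thesis .
qed

lemma sum_sin_mul_cos_telescope:
  "(\<Sum>j=1..m. 2 * sin a * cos (2 * real j * a)) = sin ((2 * real m + 1) * a) - sin a"
proof (induction m)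
  case (Suc m)
  have "(2 * real (Suc m) + 1) * a = 2 * real (Suc m) * a + a"
       "(2 * real m + 1) * a = 2 * real (Suc m) * a - a"
    by (simp_all add: algebra_simps)
  then have "2 * sin a * cos (2 * real (Suc m) * a) =
      sin ((2 * real (Suc m) + 1) * a) - sin ((2 * real m + 1) * a)"
    by (simp only: sin_add sin_diff) (simp add: algebra_simps)
  with Suc show ?case by simp
qed simp

lemma sum_inverse_one_plus_cot_node_squared:
  assumes "n \<ge> 1"
  shows "(\<Sum>j=1..n. 1 / (1 + cot_node n j ^ 2)) = (real n + 1) / 2"
proof -
  let ?a = "node_angle n"
  have sin_pos: "0 < sin ?a"
    using sin_node_angle_pos[of 1 n] assms by auto
  have "sin ((2 * real n + 1) * ?a) = - sin ?a"
  proof -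
    have "(2 * real n + 1) * ?a = 2 * pi - ?a"
      by (simp add: node_angle_def field_simps)
    then show ?thesis by (simp add: sin_diff)
  qed
  then have "sin ?a * (\<Sum>j=1..n. cos (2 * real j * ?a)) = sin ?a * (-1)"
    using sum_sin_mul_cos_telescope[of ?a n] by (simp flip: sum_distrib_left)
  with sin_pos have cos_sum: "(\<Sum>j=1..n. cos (2 * real j * ?a)) = -1"
    using mult_left_cancel[of "sin ?a"] by (metis less_irrefl)
  have "(\<Sum>j=1..n. 1 / (1 + cot_node n j ^ 2)) = (\<Sum>j=1..n. (1 - cos (2 * real j * ?a)) / 2)"
  proof (intro sum.cong refl)
    fix j assume "j \<in> {1..n}"
    then have "sin (real j * ?a) \<noteq> 0"
      using sin_node_angle_pos[of j n] by auto
    then show "1 / (1 + cot_node n j ^ 2) = (1 - cos (2 * real j * ?a)) / 2"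
      using cos_double_sin[of "real j * ?a"] by (simp add: cot_node_def one_plus_cot_squared mult.assoc)
  qed
  also have "\<dots> = (real n - (\<Sum>j=1..n. cos (2 * real j * ?a))) / 2"
    by (simp add: sum_subtractf flip: sum_divide_distrib)
  finally show ?thesis
    using cos_sum by simp
qed

lemma sum_cot_node_over_one_plus_squared: "(\<Sum>j=1..n. cot_node n j / (1 + cot_node n j ^ 2)) = 0"
proof -
  let ?g = "\<lambda>j. cot_node n j / (1 + cot_node n j ^ 2)"
  have "(\<Sum>j=1..n. ?g j) = (\<Sum>j=1..n. ?g (n + 1 - j))"
    using sum.atLeastAtMost_rev[of ?g 1 n] by (simp add: add.commute)
  also have "\<dots> = (\<Sum>j=1..n. - ?g j)"
    by (rule sum.cong) (auto simp: cot_node_reflect power2_eq_square)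
  finally show ?thesis
    by (simp add: sum_negf)
qed

section \<open>A real linearised force without kernel\<close>

lemma sum_offdiag_swap:
  assumes "finite I"
  shows "(\<Sum>i\<in>I. \<Sum>j\<in>I-{i}. f i j) = (\<Sum>i\<in>I. \<Sum>j\<in>I-{i}. f j i)"
proof -
  have "I - {i} = {j. j \<in> I \<and> i \<noteq> j}" "I - {i} = {j. j \<in> I \<and> j \<noteq> i}" for i
    by auto
  then show ?thesis
    using sum.swap_restrict[OF assms assms, of f "(\<noteq>)"] by simp
qed

lemma sum_offdiag_antisym:
  fixes f :: "'a \<Rightarrow> 'a \<Rightarrow> 'b::field_char_0"
  assumes "finite I" and "\<And>i j. f j i = - f i j"
  shows "(\<Sum>i\<in>I. \<Sum>j\<in>I-{i}. f i j) = 0"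
proof -
  let ?S = "\<Sum>i\<in>I. \<Sum>j\<in>I-{i}. f i j"
  have "?S = (\<Sum>i\<in>I. \<Sum>j\<in>I-{i}. f j i)"
    by (rule sum_offdiag_swap[OF assms(1)])
  also have "\<dots> = (\<Sum>i\<in>I. \<Sum>j\<in>I-{i}. - f i j)"
    by (intro sum.cong refl) (rule assms(2))
  also have "\<dots> = - ?S"
    by (simp only: sum_negf)
  finally have "?S = - ?S" .
  then have "?S + ?S = 0"
    by (metis add.right_inverse)
  then show ?thesis
    by (simp flip: mult_2)
qed

text \<open>n times the derivative of the level-1 forces at the points x_j + i (j in I) moving with real
  velocities r_j, while the points 0 and 2i on levels 0 and 2 stay fixed.\<close>
definition lin_force_real :: "nat set \<Rightarrow> (nat \<Rightarrow> real) \<Rightarrow> (nat \<Rightarrow> real) \<Rightarrow> nat \<Rightarrow> real" where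
  "lin_force_real I x r i = -2 / real (card I) * (\<Sum>j\<in>I-{i}. (r i - r j) / (x i - x j)^2)
      + 2 * (x i^2 - 1) / (x i^2 + 1)^2 * r i"

text \<open>With u_i = r_i/(1 + x_i^2), the balance identity splits card I * r_i * lin_force_real I x r i into
  -2(1 + x_i^2) u_i^2 and the following pair terms, whose symmetrisation is non-positive.\<close>
definition pair_term :: "real \<Rightarrow> real \<Rightarrow> real \<Rightarrow> real \<Rightarrow> real" where
  "pair_term a b u v =
     (-2 * ((1 + a^2) * u) * ((1 + a^2) * u - (1 + b^2) * v)
      + 4 * a * (1 + a^2) * u^2 * (a - b) - 2 * (1 + a^2) * u^2 * (a - b)^2) / (a - b)^2"

lemma pair_term_symmetric_sum:
  "pair_term a b u v + pair_term b a v u = -2 * (u - v)^2 * (1 + a^2) * (1 + b^2) / (a - b)^2"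
proof -
  have swap: "(b - a)^2 = (a - b)^2"
    by (simp add: power2_commute)
  show ?thesis
    unfolding pair_term_def swap add_divide_distrib[symmetric]
    by (intro arg_cong2[where f = "(/)"] refl) (simp add: algebra_simps power2_eq_square)
qed

lemma pair_term_split:
  assumes "a \<noteq> b"
  shows "pair_term a b u v = -2 * ((1 + a^2) * u) * ((1 + a^2) * u - (1 + b^2) * v) / (a - b)^2
    + 4 * a * (1 + a^2) * u^2 * (1 / (a - b)) - 2 * (1 + a^2) * u^2"
proof -
  have "(P + Q * D - R * D^2) / D^2 = P / D^2 + Q * (1 / D) - R" if "D \<noteq> 0" for P Q R D :: real
    using that by (simp add: field_simps power2_eq_square)
  moreover have "a - b \<noteq> 0"
    using assms by simp
  ultimately show ?thesis
    unfolding pair_term_def by blast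
qed

lemma lin_force_real_pairing:
  fixes x r :: "nat \<Rightarrow> real"
  assumes fin: "finite I" and i: "i \<in> I" and inj: "inj_on x I"
    and bal: "(\<Sum>j\<in>I-{i}. 1 / (x i - x j)) = real (card I) * x i / (1 + x i ^ 2)"
  defines "u \<equiv> \<lambda>k. r k / (1 + x k ^ 2)"
  shows "real (card I) * (r i * lin_force_real I x r i) =
     -2 * (1 + x i ^ 2) * u i ^ 2 + (\<Sum>j\<in>I-{i}. pair_term (x i) (x j) (u i) (u j))"
proof -
  define N where "N = real (card I)"
  define SA where "SA = (\<Sum>j\<in>I-{i}. (r i - r j) / (x i - x j)^2)"
  have pos: "0 < 1 + x k ^ 2" for k
    by (simp add: add_pos_nonneg)
  have r: "r k = (1 + x k ^ 2) * u k" for k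
    using pos[of k] by (simp add: u_def)
  have "card I \<ge> 1"
    using fin i by (auto simp: Suc_le_eq card_gt_0_iff)
  then have N: "1 \<le> N" "real (card (I - {i})) = N - 1"
    using fin i by (auto simp: N_def of_nat_diff)
  have "pair_term (x i) (x j) (u i) (u j) =
      -2 * r i * (r i - r j) / (x i - x j)^2 + 4 * x i * (1 + x i^2) * u i^2 * (1 / (x i - x j))
      - 2 * (1 + x i^2) * u i^2" if "j \<in> I - {i}" for j
    using that i inj pair_term_split[of "x i" "x j" "u i" "u j"]
    unfolding r[of i, symmetric] r[of j, symmetric] by (auto simp: inj_on_def)
  then have "(\<Sum>j\<in>I-{i}. pair_term (x i) (x j) (u i) (u j)) =
      (\<Sum>j\<in>I-{i}. -2 * r i * (r i - r j) / (x i - x j)^2)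
      + 4 * x i * (1 + x i^2) * u i^2 * (\<Sum>j\<in>I-{i}. 1 / (x i - x j))
      - real (card (I - {i})) * (2 * (1 + x i^2) * u i^2)"
    by (simp add: sum.distrib sum_subtractf sum_distrib_left sum_negf)
  also have "(\<Sum>j\<in>I-{i}. -2 * r i * (r i - r j) / (x i - x j)^2) = -2 * r i * SA"
    by (simp add: SA_def sum_distrib_left)
  finally have pairs: "(\<Sum>j\<in>I-{i}. pair_term (x i) (x j) (u i) (u j)) =
      -2 * r i * SA + 4 * x i * (1 + x i^2) * u i^2 * (N * x i / (1 + x i^2))
      - (N - 1) * (2 * (1 + x i^2) * u i^2)"
    unfolding bal N(2) N_def .
  have force: "lin_force_real I x r i = -2 / N * SA + 2 * (x i^2 - 1) / (x i^2 + 1)^2 * r i"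
    by (simp add: lin_force_real_def SA_def N_def)
  have "1 + x i ^ 2 \<noteq> 0" "x i ^ 2 + 1 \<noteq> 0" "N \<noteq> 0"
    using pos[of i] N(1) by simp_all
  then show ?thesis
    unfolding N_def[symmetric] force pairs r[of i]
    by (simp add: field_simps) (simp add: algebra_simps eval_nat_numeral)
qed

lemma lin_force_real_kernel:
  fixes x r :: "nat \<Rightarrow> real"
  assumes fin: "finite I" and inj: "inj_on x I"
    and bal: "\<And>i. i \<in> I \<Longrightarrow> (\<Sum>j\<in>I-{i}. 1 / (x i - x j)) = real (card I) * x i / (1 + x i ^ 2)"
    and ker: "\<And>i. i \<in> I \<Longrightarrow> lin_force_real I x r i = 0"
    and i: "i \<in> I"
  shows "r i = 0"
proof -
  define u where "u k = r k / (1 + x k ^ 2)" for k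
  define w where "w k = (1 + x k ^ 2) * u k ^ 2" for k
  let ?p = "\<lambda>i j. pair_term (x i) (x j) (u i) (u j)"
  have pos: "0 < 1 + x k ^ 2" for k
    by (simp add: add_pos_nonneg)
  have w_nonneg: "0 \<le> w k" for k
    using pos[of k] by (simp add: w_def)
  have "2 * w k = (\<Sum>j\<in>I-{k}. ?p k j)" if "k \<in> I" for k
    using lin_force_real_pairing[OF fin that inj bal[OF that], of r] ker[OF that]
    unfolding u_def[symmetric] w_def by (simp add: algebra_simps)
  then have "2 * (\<Sum>k\<in>I. w k) = (\<Sum>k\<in>I. \<Sum>j\<in>I-{k}. ?p k j)"
    by (simp add: sum_distrib_left)
  then have "4 * (\<Sum>k\<in>I. w k) = (\<Sum>k\<in>I. \<Sum>j\<in>I-{k}. ?p k j) + (\<Sum>k\<in>I. \<Sum>j\<in>I-{k}. ?p j k)"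
    using sum_offdiag_swap[OF fin, of ?p] by simp
  also have "\<dots> = (\<Sum>k\<in>I. \<Sum>j\<in>I-{k}. -2 * (u k - u j)^2 * (1 + x k^2) * (1 + x j^2) / (x k - x j)^2)"
    by (simp add: pair_term_symmetric_sum flip: sum.distrib)
  also have "\<dots> \<le> 0"
    by (intro sum_nonpos) (simp add: divide_nonpos_nonneg mult_nonpos_nonneg)
  finally have "(\<Sum>k\<in>I. w k) = 0"
    using sum_nonneg[of I w] w_nonneg by (simp add: order_antisym)
  then have "w i = 0"
    using sum_nonneg_eq_0_iff[OF fin] w_nonneg i by blast
  then show "r i = 0"
    using pos[of i] by (simp add: w_def u_def)
qed

section \<open>The level-1 points of the example\<close>

lemma inverse_add_inverse_conj:
  "1 / (complex_of_real x - \<i>) + 1 / (complex_of_real x + \<i>) = complex_of_real (2 * x / (x^2 + 1))"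
  by (simp add: field_simps complex_eq_iff power2_eq_square)

lemma of_real_add_ii_mult_sub_ii:
  "(complex_of_real x + \<i>) * (complex_of_real x - \<i>) = complex_of_real (x^2 + 1)"
  by (simp add: algebra_simps power2_eq_square)

lemma of_real_add_ii_nonzero: "complex_of_real x + \<i> \<noteq> 0" "complex_of_real x - \<i> \<noteq> 0"
  by (auto simp: complex_eq_iff)

lemma inverse_square_add_inverse_square_conj:
  "1 / (complex_of_real x - \<i>)^2 + 1 / (complex_of_real x + \<i>)^2 =
    complex_of_real (2 * (x^2 - 1) / (x^2 + 1)^2)"
proof -
  have "1 / (complex_of_real x - \<i>)^2 + 1 / (complex_of_real x + \<i>)^2 =
      ((complex_of_real x + \<i>)^2 + (complex_of_real x - \<i>)^2)
      / ((complex_of_real x + \<i>) * (complex_of_real x - \<i>))^2"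
  proof -
    have "1 / A^2 + 1 / B^2 = (B^2 + A^2) / (B * A)^2" if "A \<noteq> 0" "B \<noteq> 0" for A B :: complex
      using that by (simp add: field_simps power2_eq_square)
    then show ?thesis
      using of_real_add_ii_nonzero[of x] by simp
  qed
  also have "(complex_of_real x + \<i>)^2 + (complex_of_real x - \<i>)^2 = complex_of_real (2 * (x^2 - 1))"
    by (simp add: algebra_simps power2_eq_square)
  finally show ?thesis
    unfolding of_real_add_ii_mult_sub_ii by simp
qed

lemma inverse_of_real_add_ii:
  "1 / (complex_of_real x + \<i>) = complex_of_real (x / (1 + x^2)) - \<i> * complex_of_real (1 / (1 + x^2))"
proof -
  have "1 / (complex_of_real x + \<i>) =
      (complex_of_real x - \<i>) / ((complex_of_real x + \<i>) * (complex_of_real x - \<i>))"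
    using of_real_add_ii_nonzero[of x] by simp
  then have "1 / (complex_of_real x + \<i>) = (complex_of_real x - \<i>) / complex_of_real (x^2 + 1)"
    unfolding of_real_add_ii_mult_sub_ii .
  then show ?thesis
    by (simp add: add.commute diff_divide_distrib)
qed

definition level1_point :: "nat \<Rightarrow> nat \<Rightarrow> complex" where
  "level1_point n j = complex_of_real (cot_node n j) + \<i>"

lemma level1_point_diff: "level1_point n i - level1_point n j = complex_of_real (cot_node n i - cot_node n j)"
  by (simp add: level1_point_def)

lemma level1_point_minus_2ii: "level1_point n i - 2 * \<i> = complex_of_real (cot_node n i) - \<i>"
  by (simp add: level1_point_def)

lemma level1_point_nonzero: "level1_point n i \<noteq> 0"
  by (simp add: level1_point_def complex_eq_iff)

lemma level1_point_neq_2ii: "level1_point n i \<noteq> 2 * \<i>"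
  by (simp add: level1_point_def complex_eq_iff)

lemma level1_point_neq:
  assumes "i \<in> {1..n}" "j \<in> {1..n}" "i \<noteq> j"
  shows "level1_point n i \<noteq> level1_point n j"
  using inj_onD[OF inj_on_cot_node] assms by (force simp: level1_point_def)

lemma sum_inverse_level1_point:
  assumes "n \<ge> 1"
  shows "(\<Sum>j=1..n. 1 / level1_point n j) = - \<i> * complex_of_real ((real n + 1) / 2)"
proof -
  have "(\<Sum>j=1..n. 1 / level1_point n j) =
      complex_of_real (\<Sum>j=1..n. cot_node n j / (1 + cot_node n j ^ 2))
      - \<i> * complex_of_real (\<Sum>j=1..n. 1 / (1 + cot_node n j ^ 2))"
    by (simp add: level1_point_def inverse_of_real_add_ii sum_subtractf sum_distrib_left)
  then show ?thesis
    unfolding sum_cot_node_over_one_plus_squared sum_inverse_one_plus_cot_node_squared[OF assms]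
    by simp
qed

lemma level1_point_balance:
  assumes i: "i \<in> {1..n}"
  shows "2 * (1 / of_nat n)^2 * (\<Sum>j\<in>{1..n}-{i}. 1 / (level1_point n i - level1_point n j))
    - (1 / of_nat n) / (level1_point n i - 2 * \<i>) - (1 / of_nat n) / level1_point n i = 0"
proof -
  let ?x = "cot_node n i"
  have "(\<Sum>j\<in>{1..n}-{i}. 1 / (level1_point n i - level1_point n j)) =
      complex_of_real (\<Sum>j\<in>{1..n}-{i}. 1 / (cot_node n i - cot_node n j))"
    by (simp add: level1_point_diff)
  also have "\<dots> = complex_of_real (real n * ?x / (1 + ?x ^ 2))"
    unfolding cot_node_balance[OF i] ..
  finally have inner: "(\<Sum>j\<in>{1..n}-{i}. 1 / (level1_point n i - level1_point n j)) =
      complex_of_real (real n * ?x / (1 + ?x ^ 2))" .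
  have outer: "(1 / of_nat n) / (level1_point n i - 2 * \<i>) + (1 / of_nat n) / level1_point n i =
      (1 / of_nat n) * complex_of_real (2 * ?x / (?x^2 + 1))"
    unfolding level1_point_minus_2ii inverse_add_inverse_conj[symmetric]
    by (simp add: level1_point_def add_divide_distrib mult.commute)
  have "2 * (1 / of_nat n)^2 * complex_of_real (real n * ?x / (1 + ?x ^ 2)) =
      (1 / of_nat n) * complex_of_real (2 * ?x / (?x^2 + 1))"
    using i by (simp add: field_simps power2_eq_square)
  then show ?thesis
    using inner outer by (simp add: algebra_simps)
qed

text \<open>The derivative of F_{1,i} when p_{1,j} moves with velocity d j, p_{2,1} with velocity dQ and
  p_{0,1} = 0 stays fixed.\<close>
definition level1_force_deriv :: "nat \<Rightarrow> (nat \<Rightarrow> complex) \<Rightarrow> complex \<Rightarrow> nat \<Rightarrow> complex" where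
  "level1_force_deriv n d dQ i =
     -2 * (1 / of_nat n)^2 * (\<Sum>j\<in>{1..n}-{i}. (d i - d j) / (level1_point n i - level1_point n j)^2)
     + (1 / of_nat n) * ((d i - dQ) / (level1_point n i - 2 * \<i>)^2)
     + (1 / of_nat n) * (d i / (level1_point n i)^2)"

lemma sum_level1_force_deriv:
  "(\<Sum>i\<in>{1..n}. level1_force_deriv n d dQ i) =
     (1 / of_nat n) * (\<Sum>i\<in>{1..n}. (d i - dQ) / (level1_point n i - 2 * \<i>)^2)
     + (1 / of_nat n) * (\<Sum>i\<in>{1..n}. d i / (level1_point n i)^2)"
proof -
  have "(\<Sum>i\<in>{1..n}. level1_force_deriv n d dQ i) =
      -2 * (1 / of_nat n)^2 *
        (\<Sum>i\<in>{1..n}. \<Sum>j\<in>{1..n}-{i}. (d i - d j) / (level1_point n i - level1_point n j)^2)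
      + (1 / of_nat n) * (\<Sum>i\<in>{1..n}. (d i - dQ) / (level1_point n i - 2 * \<i>)^2)
      + (1 / of_nat n) * (\<Sum>i\<in>{1..n}. d i / (level1_point n i)^2)"
    unfolding level1_force_deriv_def by (simp add: sum.distrib sum_distrib_left times_divide_eq_right)
  moreover have "(\<Sum>i\<in>{1..n}. \<Sum>j\<in>{1..n}-{i}. (d i - d j) / (level1_point n i - level1_point n j)^2) = 0"
    by (rule sum_offdiag_antisym) (simp_all add: power2_commute minus_divide_left)
  ultimately show ?thesis
    by simp
qed

text \<open>The dilation about p_{0,1} = 0 only rescales the balanced level-1 forces, so its velocity
  (t p_{1,j}, 2 t i) can be subtracted without changing the derivative.\<close>
lemma level1_force_deriv_dilation:
  assumes i: "i \<in> {1..n}"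
  shows "level1_force_deriv n d (t * (2 * \<i>)) i =
    level1_force_deriv n (\<lambda>j. d j - t * level1_point n j) 0 i"
proof -
  let ?c = "1 / of_nat n :: complex"
  let ?P = "level1_point n"
  let ?d = "\<lambda>j. d j - t * ?P j"
  have split: "x / D^2 = (x - t * D) / D^2 + t * (1 / D)" if "D \<noteq> 0" for x D :: complex
    using that by (simp add: field_simps power2_eq_square)
  have "(\<Sum>j\<in>{1..n}-{i}. (d i - d j) / (?P i - ?P j)^2) =
      (\<Sum>j\<in>{1..n}-{i}. (?d i - ?d j) / (?P i - ?P j)^2 + t * (1 / (?P i - ?P j)))"
  proof (intro sum.cong refl)
    fix j assume "j \<in> {1..n}-{i}"
    then have "?P i - ?P j \<noteq> 0"
      using level1_point_neq[OF i, of j] by auto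
    then show "(d i - d j) / (?P i - ?P j)^2 = (?d i - ?d j) / (?P i - ?P j)^2 + t * (1 / (?P i - ?P j))"
      using split[of "?P i - ?P j" "d i - d j"] by (simp add: algebra_simps)
  qed
  moreover have "(d i - t * (2 * \<i>)) / (?P i - 2 * \<i>)^2 = ?d i / (?P i - 2 * \<i>)^2 + t * (1 / (?P i - 2 * \<i>))"
    using split[of "?P i - 2 * \<i>" "d i - t * (2 * \<i>)"] level1_point_neq_2ii[of n i] by (simp add: algebra_simps)
  moreover have "d i / (?P i)^2 = ?d i / (?P i)^2 + t * (1 / ?P i)"
    using split[of "?P i" "d i"] level1_point_nonzero[of n i] by simp
  ultimately have "level1_force_deriv n d (t * (2 * \<i>)) i =
      -2 * ?c^2 * ((\<Sum>j\<in>{1..n}-{i}. (?d i - ?d j) / (?P i - ?P j)^2) + t * (\<Sum>j\<in>{1..n}-{i}. 1 / (?P i - ?P j)))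
      + ?c * (?d i / (?P i - 2 * \<i>)^2 + t * (1 / (?P i - 2 * \<i>)))
      + ?c * (?d i / (?P i)^2 + t * (1 / ?P i))"
    unfolding level1_force_deriv_def by (simp only: sum.distrib flip: sum_distrib_left)
  also have "\<dots> = level1_force_deriv n ?d 0 i
      - t * (2 * ?c^2 * (\<Sum>j\<in>{1..n}-{i}. 1 / (?P i - ?P j)) - ?c / (?P i - 2 * \<i>) - ?c / ?P i)"
    unfolding level1_force_deriv_def by (simp add: algebra_simps)
  finally show ?thesis
    unfolding level1_point_balance[OF i] by simp
qed

lemma level1_force_deriv_fixed_top:
  "level1_force_deriv n d 0 i = (1 / of_nat n) *
     (complex_of_real (lin_force_real {1..n} (cot_node n) (\<lambda>j. Re (d j)) i)
      + \<i> * complex_of_real (lin_force_real {1..n} (cot_node n) (\<lambda>j. Im (d j)) i))"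
proof -
  let ?x = "cot_node n"
  define H where "H = complex_of_real (-2 / real n) *
      (\<Sum>j\<in>{1..n}-{i}. (d i - d j) / complex_of_real ((?x i - ?x j)^2))
      + complex_of_real (2 * (?x i^2 - 1) / (?x i^2 + 1)^2) * d i"
  have "level1_force_deriv n d 0 i =
      -2 * (1 / of_nat n)^2 * (\<Sum>j\<in>{1..n}-{i}. (d i - d j) / complex_of_real ((?x i - ?x j)^2))
      + (1 / of_nat n) * d i * (1 / (complex_of_real (?x i) - \<i>)^2 + 1 / (complex_of_real (?x i) + \<i>)^2)"
    unfolding level1_force_deriv_def level1_point_diff level1_point_minus_2ii
    by (simp add: level1_point_def algebra_simps)
  also have "\<dots> = (1 / of_nat n) * H"
    unfolding inverse_square_add_inverse_square_conj H_def by (simp add: algebra_simps power2_eq_square)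
  finally show ?thesis
    unfolding H_def by (simp add: complex_eq_iff lin_force_real_def)
qed

lemma level1_force_deriv_fixed_top_kernel:
  assumes "\<And>i. i \<in> {1..n} \<Longrightarrow> level1_force_deriv n d 0 i = 0" and i: "i \<in> {1..n}"
  shows "d i = 0"
proof -
  have bal: "\<And>i. i \<in> {1..n} \<Longrightarrow> (\<Sum>j\<in>{1..n}-{i}. 1 / (cot_node n i - cot_node n j)) =
      real (card {1..n}) * cot_node n i / (1 + cot_node n i ^ 2)"
    using cot_node_balance by simp
  have "n \<noteq> 0"
    using i by simp
  then have "lin_force_real {1..n} (cot_node n) (\<lambda>j. Re (d j)) k = 0"
    "lin_force_real {1..n} (cot_node n) (\<lambda>j. Im (d j)) k = 0" if "k \<in> {1..n}" for k
    using assms(1)[OF that] by (simp_all add: level1_force_deriv_fixed_top complex_eq_iff)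
  then have "Re (d i) = 0" "Im (d i) = 0"
    using lin_force_real_kernel[OF finite_atLeastAtMost inj_on_cot_node bal _ i] by blast+
  then show ?thesis
    by (simp add: complex_eq_iff)
qed

lemma level1_force_deriv_injective:
  assumes n: "n \<ge> 1"
    and bottom: "(\<Sum>i\<in>{1..n}. d i / (level1_point n i)^2) = 0"
    and top: "(\<Sum>i\<in>{1..n}. (d i - dQ) / (level1_point n i - 2 * \<i>)^2) = 0"
    and force: "\<And>i. i \<in> {2..n} \<Longrightarrow> level1_force_deriv n d dQ i = 0"
  shows "(\<forall>i\<in>{1..n}. d i = 0) \<and> dQ = 0"
proof -
  have "(\<Sum>i\<in>{1..n}. level1_force_deriv n d dQ i) = 0"
    unfolding sum_level1_force_deriv bottom top by simp
  moreover have "{1..n} = insert 1 {2..n}"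
    using n by auto
  ultimately have "level1_force_deriv n d dQ 1 = 0"
    using force by simp
  with force have all: "level1_force_deriv n d dQ i = 0" if "i \<in> {1..n}" for i
    using that by (cases "i = 1") auto
  define t where "t = dQ / (2 * \<i>)"
  have dQ: "dQ = t * (2 * \<i>)"
    by (simp add: t_def field_simps)
  have "d i - t * level1_point n i = 0" if "i \<in> {1..n}" for i
  proof (rule level1_force_deriv_fixed_top_kernel[OF _ that])
    fix k assume "k \<in> {1..n}"
    then show "level1_force_deriv n (\<lambda>j. d j - t * level1_point n j) 0 k = 0"
      using all level1_force_deriv_dilation unfolding dQ by metis
  qed
  then have d: "d i = t * level1_point n i" if "i \<in> {1..n}" for i
    using that by simp
  have "(\<Sum>i\<in>{1..n}. d i / (level1_point n i)^2) = t * (\<Sum>i\<in>{1..n}. 1 / level1_point n i)"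
    unfolding sum_distrib_left by (intro sum.cong refl) (simp add: d power2_eq_square level1_point_nonzero)
  also have "\<dots> = t * (- \<i> * complex_of_real ((real n + 1) / 2))"
    using sum_inverse_level1_point[OF n] by simp
  finally have "t * complex_of_real ((real n + 1) / 2) = 0"
    using bottom by simp
  then have "t = 0"
    using of_nat_neq_0[of n, where 'a = complex] by (simp add: add.commute)
  then show ?thesis
    using d dQ by simp
qed

section \<open>Derivatives of the forces\<close>

lemma has_field_derivative_pair_potential:
  fixes a p q e f z0 :: complex
  assumes "p - q \<noteq> 0"
  shows "((\<lambda>z. a / ((p + (z - z0) * e) - (q + (z - z0) * f))) has_field_derivative
          (- a / (p - q)^2 * (e - f))) (at z0)"
proof -
  have "((\<lambda>z. a / ((p + (z - z0) * e) - (q + (z - z0) * f))) has_field_derivative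
          (- (a * ((1 - 0) * e - (1 - 0) * f)) / ((p + (z0 - z0) * e) - (q + (z0 - z0) * f))^2)) (at z0)"
    using assms by (auto intro!: derivative_eq_intros simp: power2_eq_square)
  then show ?thesis
    by (rule DERIV_cong) (simp add: divide_simps)
qed

definition force_deriv ::
    "nat \<Rightarrow> (nat \<Rightarrow> nat) \<Rightarrow> (nat \<Rightarrow> nat \<Rightarrow> complex) \<Rightarrow> (nat \<Rightarrow> nat \<Rightarrow> complex) \<Rightarrow> nat \<Rightarrow> nat \<Rightarrow> complex" where
  "force_deriv h nn p e k i =
     2 * (\<Sum>j\<in>{1..ntype h nn k} - {i}. (- ((cc h nn k)^2) / (p k i - p k j)^2) * (e k i - e k j))
     - (\<Sum>j\<in>{1..ntype h nn (k+1)}. (- (cc h nn k * cc h nn (k+1)) / (p k i - p (k+1) j)^2) * (e k i - e (k+1) j))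
     - (if k = 0 then 0 else
        (\<Sum>j\<in>{1..ntype h nn (k-1)}. (- (cc h nn k * cc h nn (k-1)) / (p k i - p (k-1) j)^2) * (e k i - e (k-1) j)))"

definition Gforce_deriv ::
    "nat \<Rightarrow> (nat \<Rightarrow> nat) \<Rightarrow> (nat \<Rightarrow> nat \<Rightarrow> complex) \<Rightarrow> (nat \<Rightarrow> nat \<Rightarrow> complex) \<Rightarrow> nat \<Rightarrow> complex" where
  "Gforce_deriv h nn p e k =
     (\<Sum>i\<in>{1..ntype h nn k}. \<Sum>j\<in>{1..ntype h nn (k-1)}.
        (- (cc h nn k * cc h nn (k-1)) / (p k i - p (k-1) j)^2) * (e k i - e (k-1) j))"

lemma has_field_derivative_force:
  assumes "\<And>j. j \<in> {1..ntype h nn k} - {i} \<Longrightarrow> p k i \<noteq> p k j"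
    and "\<And>j. j \<in> {1..ntype h nn (k+1)} \<Longrightarrow> p k i \<noteq> p (k+1) j"
    and "\<And>j. k \<noteq> 0 \<Longrightarrow> j \<in> {1..ntype h nn (k-1)} \<Longrightarrow> p k i \<noteq> p (k-1) j"
  shows "((\<lambda>z. force h nn (\<lambda>k i. p k i + (z - z0) * e k i) k i) has_field_derivative
    force_deriv h nn p e k i) (at z0)"
proof (cases "k = 0")
  case True
  show ?thesis
    unfolding force_def force_deriv_def if_P[OF True]
    by (intro DERIV_diff DERIV_cmult DERIV_sum has_field_derivative_pair_potential DERIV_const)
      (use assms in auto)
next
  case False
  show ?thesis
    unfolding force_def force_deriv_def if_not_P[OF False]
    by (intro DERIV_diff DERIV_cmult DERIV_sum has_field_derivative_pair_potential)
      (use assms False in auto)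
qed

lemma has_field_derivative_Gforce:
  assumes "\<And>i j. i \<in> {1..ntype h nn k} \<Longrightarrow> j \<in> {1..ntype h nn (k-1)} \<Longrightarrow> p k i \<noteq> p (k-1) j"
  shows "((\<lambda>z. Gforce h nn (\<lambda>k i. p k i + (z - z0) * e k i) k) has_field_derivative
    Gforce_deriv h nn p e k) (at z0)"
  unfolding Gforce_def Gforce_deriv_def
  by (intro DERIV_sum has_field_derivative_pair_potential) (use assms in auto)

lemma sum_mult_sum_diff:
  fixes w :: "'b \<Rightarrow> 'a::comm_ring"
  assumes "finite B"
  shows "(\<Sum>b\<in>B. w b * (\<Sum>j\<in>S. c j * (g b - f b j))) =
    (\<Sum>j\<in>S. c j * ((\<Sum>b\<in>B. w b * g b) - (\<Sum>b\<in>B. w b * f b j)))"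
proof -
  have "(\<Sum>b\<in>B. w b * (\<Sum>j\<in>S. c j * (g b - f b j))) = (\<Sum>b\<in>B. \<Sum>j\<in>S. c j * (w b * g b - w b * f b j))"
    by (simp add: sum_distrib_left algebra_simps)
  also have "\<dots> = (\<Sum>j\<in>S. \<Sum>b\<in>B. c j * (w b * g b - w b * f b j))"
    by (rule sum.swap)
  also have "\<dots> = (\<Sum>j\<in>S. c j * ((\<Sum>b\<in>B. w b * g b) - (\<Sum>b\<in>B. w b * f b j)))"
    by (simp add: sum_distrib_left sum_subtractf right_diff_distrib)
  finally show ?thesis .
qed

lemma sum_mult_force_deriv:
  fixes B :: "'b set"
  assumes "finite B"
  shows "(\<Sum>b\<in>B. w b * force_deriv h nn p (e b) k i) =
    force_deriv h nn p (\<lambda>k i. \<Sum>b\<in>B. w b * e b k i) k i"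
proof -
  have L: "(\<Sum>b\<in>B. w b * (2 * X b - Y b - Z b)) =
      2 * (\<Sum>b\<in>B. w b * X b) - (\<Sum>b\<in>B. w b * Y b) - (\<Sum>b\<in>B. w b * Z b)" for X Y Z :: "'b \<Rightarrow> complex"
    by (simp add: sum_subtractf sum_distrib_left sum.distrib algebra_simps)
  show ?thesis
  proof (cases "k = 0")
    case True
    show ?thesis
      unfolding force_deriv_def if_P[OF True] L sum_mult_sum_diff[OF assms] by simp
  next
    case False
    show ?thesis
      unfolding force_deriv_def if_not_P[OF False] L sum_mult_sum_diff[OF assms] ..
  qed
qed

lemma sum_mult_Gforce_deriv:
  assumes "finite B"
  shows "(\<Sum>b\<in>B. w b * Gforce_deriv h nn p (e b) k) =
    Gforce_deriv h nn p (\<lambda>k i. \<Sum>b\<in>B. w b * e b k i) k"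
proof -
  have "(\<Sum>b\<in>B. w b * Gforce_deriv h nn p (e b) k) =
    (\<Sum>i\<in>{1..ntype h nn k}. \<Sum>b\<in>B. w b * (\<Sum>j\<in>{1..ntype h nn (k-1)}.
        (- (cc h nn k * cc h nn (k-1)) / (p k i - p (k-1) j)^2) * (e b k i - e b (k-1) j)))"
    unfolding Gforce_deriv_def sum_distrib_left by (rule sum.swap)
  then show ?thesis
    unfolding sum_mult_sum_diff[OF assms] Gforce_deriv_def .
qed

section \<open>The example configuration\<close>

lemma ntype_type1n1: "ntype 2 (type1n1 n) k = (if k = 1 then n else if k \<le> 2 then 1 else 0)"
  unfolding ntype_def type1n1_def by simp

lemma cc_type1n1: "cc 2 (type1n1 n) k = (if k = 1 then 1 / of_nat n else if k \<le> 2 then 1 else 0)"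
  unfolding cc_def ntype_type1n1 by simp

lemma example_config_eq:
  "example_config n k j = (if k = 0 then 0 else if k = 1 then level1_point n j else 2 * \<i>)"
  by (simp add: example_config_def level1_point_def cot_node_def node_angle_def)

lemma force_level1_example:
  assumes "i \<in> {1..n}"
  shows "force 2 (type1n1 n) (example_config n) 1 i =
    2 * (1 / of_nat n)^2 * (\<Sum>j\<in>{1..n}-{i}. 1 / (level1_point n i - level1_point n j))
    - (1 / of_nat n) / (level1_point n i - 2 * \<i>) - (1 / of_nat n) / level1_point n i"
  by (simp add: force_def ntype_type1n1 cc_type1n1 example_config_eq sum_distrib_left)

lemma balanced_example: "balanced 2 (type1n1 n) (example_config n)"
  unfolding balanced_def
proof (intro allI impI)
  fix k i assume "1 \<le> k \<and> k \<le> 2 - 1 \<and> 1 \<le> i \<and> i \<le> type1n1 n k"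
  then have "k = 1" "i \<in> {1..n}"
    by (auto simp: type1n1_def)
  then show "force 2 (type1n1 n) (example_config n) k i = 0"
    using level1_point_balance force_level1_example by simp
qed

lemma residual_force_example:
  assumes "n \<ge> 1"
  shows "residual_force 2 (type1n1 n) (example_config n) = of_nat (n + 1) / (2 * of_nat n * \<i>)"
proof -
  have "residual_force 2 (type1n1 n) (example_config n) = (1 / of_nat n) * (\<Sum>j=1..n. 1 / level1_point n j)"
    by (simp add: residual_force_def force_def ntype_type1n1 cc_type1n1 example_config_eq
        sum_distrib_left sum_negf)
  also have "\<dots> = of_nat (n + 1) / (2 * of_nat n * \<i>)"
    unfolding sum_inverse_level1_point[OF assms] using assms by (simp add: field_simps)
  finally show ?thesis .
qed

text \<open>The velocity of \<open>rebuild2\<close> when coordinate b moves with unit speed.\<close>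
definition coord_direction :: "nat \<Rightarrow> nat \<Rightarrow> nat \<Rightarrow> nat \<Rightarrow> complex" where
  "coord_direction n b k i =
     (if k = 0 then 0
      else if k = 1 then of_bool (b = 0) + of_bool (i \<noteq> 1 \<and> b = i - 1)
      else of_bool (b = 0) + of_bool (b = n))"

lemma rebuild2_fun_upd:
  "rebuild2 n p01 (x(b := z)) = (\<lambda>k i. rebuild2 n p01 x k i + (z - x b) * coord_direction n b k i)"
  by (intro ext) (auto simp: rebuild2_def coord_direction_def algebra_simps)

definition example_rebuilt :: "nat \<Rightarrow> nat \<Rightarrow> nat \<Rightarrow> complex" where
  "example_rebuilt n = rebuild2 n (example_config n 0 1) (coords2 n (example_config n))"

text \<open>The level is a hypothesis k = 0, 1, 2 so that the simplifier also rewrites instances such as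
  level Suc 0 arising from k + 1 and k - 1.\<close>
lemma example_rebuilt_level0: "k = 0 \<Longrightarrow> example_rebuilt n k j = 0"
  by (simp add: example_rebuilt_def rebuild2_def example_config_eq)

lemma example_rebuilt_level1: "k = 1 \<Longrightarrow> i \<in> {1..n} \<Longrightarrow> example_rebuilt n k i = level1_point n i"
  by (auto simp: example_rebuilt_def rebuild2_def coords2_def example_config_eq)

lemma example_rebuilt_level2: "k = 2 \<Longrightarrow> n \<ge> 1 \<Longrightarrow> example_rebuilt n k j = 2 * \<i>"
  by (simp add: example_rebuilt_def rebuild2_def coords2_def example_config_eq)

lemma Gforce_deriv_level1_example:
  "Gforce_deriv 2 (type1n1 n) (example_rebuilt n) e 1 =
    - (1 / of_nat n) * (\<Sum>i\<in>{1..n}. (e 1 i - e 0 1) / (level1_point n i)^2)"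
proof -
  have "Gforce_deriv 2 (type1n1 n) (example_rebuilt n) e 1 =
      (\<Sum>i\<in>{1..n}. - (1 / of_nat n) / (example_rebuilt n 1 i - example_rebuilt n 0 1)^2 * (e 1 i - e 0 1))"
    by (simp add: Gforce_deriv_def ntype_type1n1 cc_type1n1)
  also have "\<dots> = (\<Sum>i\<in>{1..n}. - (1 / of_nat n) * ((e 1 i - e 0 1) / (level1_point n i)^2))"
    by (intro sum.cong refl) (simp add: example_rebuilt_level0 example_rebuilt_level1)
  finally show ?thesis
    by (simp add: sum_distrib_left)
qed

lemma Gforce_deriv_level2_example:
  assumes "n \<ge> 1"
  shows "Gforce_deriv 2 (type1n1 n) (example_rebuilt n) e 2 =
    (1 / of_nat n) * (\<Sum>i\<in>{1..n}. (e 1 i - e 2 1) / (level1_point n i - 2 * \<i>)^2)"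
proof -
  have "Gforce_deriv 2 (type1n1 n) (example_rebuilt n) e 2 =
      (\<Sum>i\<in>{1..n}. - (1 / of_nat n) / (example_rebuilt n 2 1 - example_rebuilt n 1 i)^2 * (e 2 1 - e 1 i))"
    by (simp add: Gforce_deriv_def ntype_type1n1 cc_type1n1)
  also have "\<dots> = (\<Sum>i\<in>{1..n}. (1 / of_nat n) * ((e 1 i - e 2 1) / (level1_point n i - 2 * \<i>)^2))"
  proof (intro sum.cong refl)
    fix i assume "i \<in> {1..n}"
    moreover have "(2 * \<i> - level1_point n i)^2 = (level1_point n i - 2 * \<i>)^2"
      by (rule power2_commute)
    ultimately show "- (1 / of_nat n) / (example_rebuilt n 2 1 - example_rebuilt n 1 i)^2 * (e 2 1 - e 1 i) =
        (1 / of_nat n) * ((e 1 i - e 2 1) / (level1_point n i - 2 * \<i>)^2)"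
      using assms level1_point_neq_2ii[of n i]
      by (simp add: example_rebuilt_level1 example_rebuilt_level2) (simp add: field_simps)
  qed
  finally show ?thesis
    by (simp add: sum_distrib_left)
qed

lemma force_deriv_level1_example:
  assumes i: "i \<in> {1..n}" and "e 0 1 = 0"
  shows "force_deriv 2 (type1n1 n) (example_rebuilt n) e 1 i = level1_force_deriv n (e 1) (e 2 1) i"
proof -
  let ?q = "example_rebuilt n"
  have "n \<ge> 1"
    using i by simp
  have "force_deriv 2 (type1n1 n) ?q e 1 i =
      2 * (\<Sum>j\<in>{1..n}-{i}. - ((1 / of_nat n)^2) / (?q 1 i - ?q 1 j)^2 * (e 1 i - e 1 j))
      - (- (1 / of_nat n) / (?q 1 i - ?q (1+1) 1)^2) * (e 1 i - e (1+1) 1)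
      - (- (1 / of_nat n) / (?q 1 i - ?q (1-1) 1)^2) * (e 1 i - e (1-1) 1)"
    by (simp add: force_deriv_def ntype_type1n1 cc_type1n1)
  also have "\<dots> = level1_force_deriv n (e 1) (e 2 1) i"
  proof -
    have "(\<Sum>j\<in>{1..n}-{i}. - ((1 / of_nat n)^2) / (?q 1 i - ?q 1 j)^2 * (e 1 i - e 1 j)) =
        - ((1 / of_nat n)^2) * (\<Sum>j\<in>{1..n}-{i}. (e 1 i - e 1 j) / (level1_point n i - level1_point n j)^2)"
      unfolding sum_distrib_left using i by (intro sum.cong refl) (simp add: example_rebuilt_level1)
    moreover have "(1::nat) + 1 = 2" "(1::nat) - 1 = 0"
      by simp_all
    ultimately show ?thesis
      using assms \<open>n \<ge> 1\<close>
      by (simp only:) (simp add: level1_force_deriv_def example_rebuilt_level0 example_rebuilt_level1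
          example_rebuilt_level2 algebra_simps diff_divide_distrib)
  qed
  finally show ?thesis .
qed

definition example_jacobian :: "nat \<Rightarrow> nat \<Rightarrow> nat \<Rightarrow> complex" where
  "example_jacobian n a b =
     (if a = 0 then Gforce_deriv 2 (type1n1 n) (example_rebuilt n) (coord_direction n b) 1
      else if a < n then force_deriv 2 (type1n1 n) (example_rebuilt n) (coord_direction n b) 1 (a + 1)
      else Gforce_deriv 2 (type1n1 n) (example_rebuilt n) (coord_direction n b) 2)"

lemma has_field_derivative_example_jacobian:
  assumes n: "n \<ge> 1"
  shows "((\<lambda>z. coord_map2 n (example_config n 0 1) ((coords2 n (example_config n))(b := z)) a)
          has_field_derivative example_jacobian n a b) (at (coords2 n (example_config n) b))"
proof -
  let ?x = "coords2 n (example_config n)"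
  let ?q = "\<lambda>z k i. example_rebuilt n k i + (z - ?x b) * coord_direction n b k i"
  have map: "coord_map2 n (example_config n 0 1) (?x(b := z)) a =
     (if a = 0 then Gforce 2 (type1n1 n) (?q z) 1
      else if a < n then force 2 (type1n1 n) (?q z) 1 (a + 1)
      else Gforce 2 (type1n1 n) (?q z) 2)" for z
    unfolding coord_map2_def Let_def rebuild2_fun_upd example_rebuilt_def ..
  consider "a = 0" | "0 < a" "a < n" | "0 < a" "\<not> a < n"
    by auto
  then show ?thesis
  proof cases
    case 1
    have "((\<lambda>z. Gforce 2 (type1n1 n) (?q z) 1) has_field_derivative
        Gforce_deriv 2 (type1n1 n) (example_rebuilt n) (coord_direction n b) 1) (at (?x b))"
      by (rule has_field_derivative_Gforce)
        (simp add: ntype_type1n1 example_rebuilt_level0 example_rebuilt_level1 level1_point_nonzero)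
    with 1 show ?thesis
      unfolding map example_jacobian_def by simp
  next
    case 2
    then have i: "a + 1 \<in> {1..n}"
      by simp
    have "((\<lambda>z. force 2 (type1n1 n) (?q z) 1 (a + 1)) has_field_derivative
        force_deriv 2 (type1n1 n) (example_rebuilt n) (coord_direction n b) 1 (a + 1)) (at (?x b))"
      by (rule has_field_derivative_force)
        (use i n level1_point_neq level1_point_nonzero level1_point_neq_2ii in
          \<open>auto simp: ntype_type1n1 example_rebuilt_level0 example_rebuilt_level1 example_rebuilt_level2\<close>)
    with 2 show ?thesis
      unfolding map example_jacobian_def by simp
  next
    case 3
    have "((\<lambda>z. Gforce 2 (type1n1 n) (?q z) 2) has_field_derivative
        Gforce_deriv 2 (type1n1 n) (example_rebuilt n) (coord_direction n b) 2) (at (?x b))"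
      by (rule has_field_derivative_Gforce)
        (use n level1_point_neq_2ii[symmetric] in \<open>auto simp: ntype_type1n1 example_rebuilt_level1 example_rebuilt_level2\<close>)
    with 3 show ?thesis
      unfolding map example_jacobian_def by simp
  qed
qed

definition coord_velocity :: "nat \<Rightarrow> (nat \<Rightarrow> complex) \<Rightarrow> nat \<Rightarrow> nat \<Rightarrow> complex" where
  "coord_velocity n w k i = (\<Sum>b<n+1. w b * coord_direction n b k i)"

lemma coord_velocity_eq:
  "coord_velocity n w 0 1 = 0" "coord_velocity n w 1 1 = w 0" "coord_velocity n w 2 1 = w 0 + w n"
  "2 \<le> i \<Longrightarrow> i \<le> n \<Longrightarrow> coord_velocity n w 1 i = w 0 + w (i - 1)"
  by (simp_all add: coord_velocity_def coord_direction_def sum.distrib distrib_left) arith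

lemma sum_mult_example_jacobian:
  "(\<Sum>b<n+1. w b * example_jacobian n a b) =
     (if a = 0 then Gforce_deriv 2 (type1n1 n) (example_rebuilt n) (coord_velocity n w) 1
      else if a < n then force_deriv 2 (type1n1 n) (example_rebuilt n) (coord_velocity n w) 1 (a + 1)
      else Gforce_deriv 2 (type1n1 n) (example_rebuilt n) (coord_velocity n w) 2)"
proof (cases "a = 0")
  case True
  show ?thesis
    unfolding coord_velocity_def example_jacobian_def if_P[OF True]
    by (rule sum_mult_Gforce_deriv) simp
next
  case False
  show ?thesis
  proof (cases "a < n")
    case True
    show ?thesis
      unfolding coord_velocity_def example_jacobian_def if_not_P[OF False] if_P[OF True]
      by (rule sum_mult_force_deriv) simp
  next
    case below: False
    show ?thesis
      unfolding coord_velocity_def example_jacobian_def if_not_P[OF False] if_not_P[OF below]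
      by (rule sum_mult_Gforce_deriv) simp
  qed
qed

lemma example_jacobian_kernel:
  assumes n: "n \<ge> 1" and rows: "\<And>a. a < n + 1 \<Longrightarrow> (\<Sum>b<n+1. w b * example_jacobian n a b) = 0"
    and b: "b < n + 1"
  shows "w b = 0"
proof -
  let ?e = "coord_velocity n w"
  have "(\<forall>i\<in>{1..n}. ?e 1 i = 0) \<and> ?e 2 1 = 0"
  proof (rule level1_force_deriv_injective[OF n])
    have "Gforce_deriv 2 (type1n1 n) (example_rebuilt n) ?e 1 = 0"
      using rows[of 0, unfolded sum_mult_example_jacobian] by simp
    then show "(\<Sum>i\<in>{1..n}. ?e 1 i / (level1_point n i)^2) = 0"
      unfolding Gforce_deriv_level1_example coord_velocity_eq using n by simp
    have "Gforce_deriv 2 (type1n1 n) (example_rebuilt n) ?e 2 = 0"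
      using rows[of n, unfolded sum_mult_example_jacobian] n by simp
    then show "(\<Sum>i\<in>{1..n}. (?e 1 i - ?e 2 1) / (level1_point n i - 2 * \<i>)^2) = 0"
      unfolding Gforce_deriv_level2_example[OF n] using n by simp
  next
    fix i assume i: "i \<in> {2..n}"
    then have "i - 1 \<noteq> 0" "i - 1 < n" "i - 1 + 1 = i" "i - 1 < n + 1"
      by auto
    with i have "force_deriv 2 (type1n1 n) (example_rebuilt n) ?e 1 i = 0"
      using rows[of "i - 1", unfolded sum_mult_example_jacobian] by simp
    with i show "level1_force_deriv n (?e 1) (?e 2 1) i = 0"
      using force_deriv_level1_example[of i n ?e] coord_velocity_eq(1) by simp
  qed
  then have level1: "\<And>i. i \<in> {1..n} \<Longrightarrow> ?e 1 i = 0" and level2: "?e 2 1 = 0"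
    by auto
  have "w 0 = 0"
    using level1[of 1, unfolded coord_velocity_eq(2)] n by simp
  moreover have "w b = 0" if "0 < b" "b < n"
    using level1[of "b + 1"] that coord_velocity_eq(4)[of "b + 1" n w] \<open>w 0 = 0\<close> by simp
  ultimately show "w b = 0"
    using b level2[unfolded coord_velocity_eq(3)] by (cases "b = 0"; cases "b = n") auto
qed

lemma det_example_jacobian_nonzero:
  assumes n: "n \<ge> 1"
  shows "det (mat (n+1) (n+1) (\<lambda>(a, b). example_jacobian n a b)) \<noteq> 0"
proof
  let ?M = "mat (n+1) (n+1) (\<lambda>(a, b). example_jacobian n a b)"
  assume "det ?M = 0"
  then obtain v where v: "v \<in> carrier_vec (n+1)" "v \<noteq> 0\<^sub>v (n+1)" "?M *\<^sub>v v = 0\<^sub>v (n+1)"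
    using det_0_iff_vec_prod_zero_field[of ?M "n+1"] by auto
  have "(\<Sum>b<n+1. v $ b * example_jacobian n a b) = 0" if "a < n + 1" for a
  proof -
    have "(?M *\<^sub>v v) $ a = (\<Sum>b<n+1. v $ b * example_jacobian n a b)"
      using that v(1) by (simp add: scalar_prod_def lessThan_atLeast0 mult.commute)
    moreover have "(?M *\<^sub>v v) $ a = 0"
      using v(3) that by simp
    ultimately show ?thesis
      by simp
  qed
  then have "v $ b = 0" if "b < n + 1" for b
    using example_jacobian_kernel[OF n _ that, of "\<lambda>b. v $ b"] by blast
  then have "v = 0\<^sub>v (n+1)"
    using v(1) by (intro eq_vecI) auto
  with v(2) show False ..
qed

theorem proposition3p3:
  fixes n :: nat
  assumes "n \<ge> 1"
  shows "balanced 2 (type1n1 n) (example_config n)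
       \<and> nondegenerate2 n (example_config n)
       \<and> residual_force 2 (type1n1 n) (example_config n) = of_nat (n + 1) / (2 * of_nat n * \<i>)"
  unfolding nondegenerate2_def
  using balanced_example residual_force_example[OF assms]
    has_field_derivative_example_jacobian[OF assms] det_example_jacobian_nonzero[OF assms]
  by blast

end
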